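(* Let $\beta\subset\mathcal B$. If $\beta$ is not extremal successor closed, then the $\beta$-state is contradictory, i.e. $\mathrm{Ev}(f_\beta)=\emptyset$.
   Context: Let $Q$ be a quiver with finite vertex and arrow sets $Q_0,Q_1$, $M$ a finite-dimensional complex representation, and $\mathcal B=\bigcup_p\mathcal B_p$ an ordered basis ($\mathcal B_p$ a basis of $M_p$, with a total order on $\mathcal B$). For $v:p\to q$, $i\in\mathcal B_p$ write $M_v(i)=\sum_{j\in\mathcal B_q}\mu_{v,i,j}j$. The coefficient quiver $\Gamma$ has vertices $\mathcal B$ and arrows $(v,i,j)$ ($i\in\mathcal B_p$, $j\in\mathcal B_q$, $\mu_{v,i,j}\ne0$); $F:\Gamma\to Q$ is the natural map. An arrow $(v,s,t)$ of $\Gamma$ is extremal if for all arrows $(v,s',t')\in\Gamma_1$ different from $(v,s,t)$ either $s<s'$ or $t'<t$. A subset $\beta\subset\mathcal B$ is extremal successor closed if for every extremal arrow $(v,s,t)$, $s\in\beta$ implies $t\in\beta$. For $v:p\to q$, $s\in F^{-1}(p)$, $t\in F^{-1}(q)$ let $E(v,t,s)=\sum_{(v,s',t')\in\Gamma_1}\mu_{v,s',t'}w_{t,t'}w_{s',s}-\sum_{(v,s',t)\in\Gamma_1}\mu_{v,s',t}w_{s',s}$ in variables $w_{i,j}$. $\mathrm{Rel}^2=\{(i,j):F(i)=F(j),i\le j\}$; $\mathrm{Rel}^3$ is the set of such $(v,t,s)$ for which some $(v,s',t')\in\Gamma_1$ has $s\ge s'$, $t\le t'$; $E(v,t,s)$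 is regarded as a polynomial in $w_{i,j}$, $(i,j)\in\mathrm{Rel}^2$ (other variables set to $0$). The Schubert system $\Sigma$ is the graph on $\mathrm{Rel}^2\sqcup\mathrm{Rel}^3$ with an edge $\{(i,j),(v,t,s)\}$ iff $w_{i,j}$ occurs in $E(v,t,s)$, with links $\lambda=((v,t,s),S)$, $S\subset\mathrm{Rel}^2$, whenever the monomial $\prod_{(i,j)\in S}w_{i,j}$ occurs in $E(v,t,s)$ with nonzero coefficient $\mu_\lambda$. A partial evaluation is a partial function $\mathrm{ev}:\mathrm{Rel}^2\dashrightarrow\mathbb C$ such that for every $(v,t,s)\in\mathrm{Rel}^3$ and neighbour $(k,l)$: if all other neighbours of $(v,t,s)$ are in the domain, then $(k,l)$ is in the domain and $\sum_{\lambda=((v,t,s),S)}\mu_\lambda\prod_{(i,j)\in S}\mathrm{ev}(i,j)=0$. $f_\beta$ is the partial function with $f_\beta(i,j)=1$ if $i=j\in\beta$, $0$ if $i\in\beta$, $i\neq j$, $0$ if $j\notin\beta$, undefined otherwise; $\mathrm{Ev}(f_\beta)$ is the set of partial evaluations extending $f_\beta$. *)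

theory Defs
  imports Complex_Main "HOL-Library.Multiset"
begin

text \<open>Basis B (finite, totally ordered
  via the linorder on 'b), F : B -> Q0 the vertex of each basis vector, and
  mu v i j the coefficient of j in M_v(i).\<close>

definition coeff_arrows ::
  "'a set \<Rightarrow> ('a \<Rightarrow> 'q) \<Rightarrow> ('a \<Rightarrow> 'q) \<Rightarrow> 'b set \<Rightarrow> ('b \<Rightarrow> 'q)
   \<Rightarrow> ('a \<Rightarrow> 'b \<Rightarrow> 'b \<Rightarrow> complex) \<Rightarrow> ('a \<times> 'b \<times> 'b) set" where
  "coeff_arrows Q1 src tgt B F mu =
     {(v, i, j). v \<in> Q1 \<and> i \<in> B \<and> j \<in> B \<and> F i = src v \<and> F j = tgt v \<and> mu v i j \<noteq> 0}"

definition extremal ::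
  "'a set \<Rightarrow> ('a \<Rightarrow> 'q) \<Rightarrow> ('a \<Rightarrow> 'q) \<Rightarrow> ('b::linorder) set \<Rightarrow> ('b \<Rightarrow> 'q)
   \<Rightarrow> ('a \<Rightarrow> 'b \<Rightarrow> 'b \<Rightarrow> complex) \<Rightarrow> 'a \<Rightarrow> 'b \<Rightarrow> 'b \<Rightarrow> bool" where
  "extremal Q1 src tgt B F mu v s t \<longleftrightarrow>
     (v, s, t) \<in> coeff_arrows Q1 src tgt B F mu \<and>
     (\<forall>s' t'. (v, s', t') \<in> coeff_arrows Q1 src tgt B F mu \<and> (s', t') \<noteq> (s, t)
        \<longrightarrow> s < s' \<or> t' < t)"

definition ext_succ_closed ::
  "'a set \<Rightarrow> ('a \<Rightarrow> 'q) \<Rightarrow> ('a \<Rightarrow> 'q) \<Rightarrow> ('b::linorder) set \<Rightarrow> ('b \<Rightarrow> 'q)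
   \<Rightarrow> ('a \<Rightarrow> 'b \<Rightarrow> 'b \<Rightarrow> complex) \<Rightarrow> 'b set \<Rightarrow> bool" where
  "ext_succ_closed Q1 src tgt B F mu \<beta> \<longleftrightarrow>
     (\<forall>v s t. extremal Q1 src tgt B F mu v s t \<longrightarrow> s \<in> \<beta> \<longrightarrow> t \<in> \<beta>)"

definition Rel2 :: "('b::linorder) set \<Rightarrow> ('b \<Rightarrow> 'q) \<Rightarrow> ('b \<times> 'b) set" where
  "Rel2 B F = {(i, j). i \<in> B \<and> j \<in> B \<and> F i = F j \<and> i \<le> j}"

definition Rel3 ::
  "'a set \<Rightarrow> ('a \<Rightarrow> 'q) \<Rightarrow> ('a \<Rightarrow> 'q) \<Rightarrow> ('b::linorder) set \<Rightarrow> ('b \<Rightarrow> 'q)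
   \<Rightarrow> ('a \<Rightarrow> 'b \<Rightarrow> 'b \<Rightarrow> complex) \<Rightarrow> ('a \<times> 'b \<times> 'b) set" where
  "Rel3 Q1 src tgt B F mu =
     {(v, t, s). v \<in> Q1 \<and> s \<in> B \<and> t \<in> B \<and> F s = src v \<and> F t = tgt v \<and>
        (\<exists>s' t'. (v, s', t') \<in> coeff_arrows Q1 src tgt B F mu \<and> s' \<le> s \<and> t \<le> t')}"

text \<open>The polynomial E(v,t,s), in the variables w_(i,j) with (i,j) in Rel2 (all other
  variables set to 0), represented by its coefficient function on monomials; a monomial
  is a multiset of variables.\<close>

definition Ecoef ::
  "'a set \<Rightarrow> ('a \<Rightarrow> 'q) \<Rightarrow> ('a \<Rightarrow> 'q) \<Rightarrow> ('b::linorder) set \<Rightarrow> ('b \<Rightarrow> 'q)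
   \<Rightarrow> ('a \<Rightarrow> 'b \<Rightarrow> 'b \<Rightarrow> complex) \<Rightarrow> 'a \<Rightarrow> 'b \<Rightarrow> 'b \<Rightarrow> ('b \<times> 'b) multiset \<Rightarrow> complex" where
  "Ecoef Q1 src tgt B F mu v t s m =
     (\<Sum>(s', t') \<in> {(s', t'). (v, s', t') \<in> coeff_arrows Q1 src tgt B F mu \<and>
            (t, t') \<in> Rel2 B F \<and> (s', s) \<in> Rel2 B F \<and> m = {#(t, t'), (s', s)#}}.
        mu v s' t')
   - (\<Sum>s' \<in> {s'. (v, s', t) \<in> coeff_arrows Q1 src tgt B F mu \<and>
            (s', s) \<in> Rel2 B F \<and> m = {#(s', s)#}}.
        mu v s' t)"

definition links ::
  "'a set \<Rightarrow> ('a \<Rightarrow> 'q) \<Rightarrow> ('a \<Rightarrow> 'q) \<Rightarrow> ('b::linorder) set \<Rightarrow> ('b \<Rightarrow> 'q)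
   \<Rightarrow> ('a \<Rightarrow> 'b \<Rightarrow> 'b \<Rightarrow> complex) \<Rightarrow> 'a \<Rightarrow> 'b \<Rightarrow> 'b \<Rightarrow> ('b \<times> 'b) multiset set" where
  "links Q1 src tgt B F mu v t s = {m. Ecoef Q1 src tgt B F mu v t s m \<noteq> 0}"

definition neighbours ::
  "'a set \<Rightarrow> ('a \<Rightarrow> 'q) \<Rightarrow> ('a \<Rightarrow> 'q) \<Rightarrow> ('b::linorder) set \<Rightarrow> ('b \<Rightarrow> 'q)
   \<Rightarrow> ('a \<Rightarrow> 'b \<Rightarrow> 'b \<Rightarrow> complex) \<Rightarrow> 'a \<Rightarrow> 'b \<Rightarrow> 'b \<Rightarrow> ('b \<times> 'b) set" where
  "neighbours Q1 src tgt B F mu v t s =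
     {ij. \<exists>m \<in> links Q1 src tgt B F mu v t s. ij \<in># m}"

definition partial_evaluation ::
  "'a set \<Rightarrow> ('a \<Rightarrow> 'q) \<Rightarrow> ('a \<Rightarrow> 'q) \<Rightarrow> ('b::linorder) set \<Rightarrow> ('b \<Rightarrow> 'q)
   \<Rightarrow> ('a \<Rightarrow> 'b \<Rightarrow> 'b \<Rightarrow> complex) \<Rightarrow> ('b \<times> 'b \<Rightarrow> complex option) \<Rightarrow> bool" where
  "partial_evaluation Q1 src tgt B F mu ev \<longleftrightarrow>
     dom ev \<subseteq> Rel2 B F \<and>
     (\<forall>(v, t, s) \<in> Rel3 Q1 src tgt B F mu.
        \<forall>kl \<in> neighbours Q1 src tgt B F mu v t s.
          neighbours Q1 src tgt B F mu v t s - {kl} \<subseteq> dom ev \<longrightarrow>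
            kl \<in> dom ev \<and>
            (\<Sum>m \<in> links Q1 src tgt B F mu v t s.
               Ecoef Q1 src tgt B F mu v t s m * prod_mset (image_mset (\<lambda>ij. the (ev ij)) m)) = 0)"

definition f_state :: "('b::linorder) set \<Rightarrow> ('b \<Rightarrow> 'q) \<Rightarrow> 'b set \<Rightarrow> ('b \<times> 'b \<Rightarrow> complex option)" where
  "f_state B F \<beta> = (\<lambda>(i, j).
     if (i, j) \<notin> Rel2 B F then None
     else if i = j \<and> i \<in> \<beta> then Some 1
     else if i \<in> \<beta> \<and> i \<noteq> j then Some 0
     else if j \<notin> \<beta> then Some 0
     else None)"

definition Ev ::
  "'a set \<Rightarrow> ('a \<Rightarrow> 'q) \<Rightarrow> ('a \<Rightarrow> 'q) \<Rightarrow> ('b::linorder) set \<Rightarrow> ('b \<Rightarrow> 'q)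
   \<Rightarrow> ('a \<Rightarrow> 'b \<Rightarrow> 'b \<Rightarrow> complex) \<Rightarrow> ('b \<times> 'b \<Rightarrow> complex option)
   \<Rightarrow> ('b \<times> 'b \<Rightarrow> complex option) set" where
  "Ev Q1 src tgt B F mu f = {ev. partial_evaluation Q1 src tgt B F mu ev \<and> f \<subseteq>\<^sub>m ev}"

end

theory Submission
  imports Defs
begin

text \<open>At an extremal arrow \<open>(v, s, t)\<close> the arrow itself is the only one surviving in
  either sum of \<open>E(v, t, s)\<close>, so \<open>E(v, t, s) = \<mu> w(s,s) (w(t,t) - 1)\<close> with
  \<open>\<mu> = \<mu>(v,s,t) \<noteq> 0\<close>. A partial evaluation defined at \<open>(t, t)\<close> is therefore defined at
  \<open>(s, s)\<close> and satisfies \<open>w(s,s) (w(t,t) - 1) = 0\<close>, whereas the \<open>\<beta>\<close>-state with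
  \<open>s \<in> \<beta>\<close>, \<open>t \<notin> \<beta>\<close> prescribes \<open>w(s,s) = 1\<close> and \<open>w(t,t) = 0\<close>.\<close>

lemma extremal_coeff_arrow:
  assumes "extremal Q1 src tgt B F mu v s t"
  shows "v \<in> Q1" "s \<in> B" "t \<in> B" "F s = src v" "F t = tgt v" "mu v s t \<noteq> 0"
  using assms unfolding extremal_def coeff_arrows_def by auto

lemma extremal_Rel3:
  assumes "extremal Q1 src tgt B F mu v s t"
  shows "(v, t, s) \<in> Rel3 Q1 src tgt B F mu"
  using assms unfolding extremal_def Rel3_def coeff_arrows_def by blast

lemma extremal_Ecoef:
  assumes ext: "extremal Q1 src tgt B F mu v s t"
  shows "Ecoef Q1 src tgt B F mu v t s m =
           (if m = {#(t, t), (s, s)#} then mu v s t else 0) - (if m = {#(s, s)#} then mu v s t else 0)"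
proof -
  let ?CA = "coeff_arrows Q1 src tgt B F mu"
  have arr: "(v, s, t) \<in> ?CA"
    and other: "\<And>s' t'. (v, s', t') \<in> ?CA \<Longrightarrow> (s', t') \<noteq> (s, t) \<Longrightarrow> s < s' \<or> t' < t"
    using ext unfolding extremal_def by blast+
  have diag: "(s, s) \<in> Rel2 B F" "(t, t) \<in> Rel2 B F"
    using extremal_coeff_arrow[OF ext] unfolding Rel2_def by auto
  have "{(s', t'). (v, s', t') \<in> ?CA \<and> (t, t') \<in> Rel2 B F \<and> (s', s) \<in> Rel2 B F
                   \<and> m = {#(t, t'), (s', s)#}}
        = (if m = {#(t, t), (s, s)#} then {(s, t)} else {})"
  proof -
    have "(s', t') = (s, t)" if "(v, s', t') \<in> ?CA" "(t, t') \<in> Rel2 B F" "(s', s) \<in> Rel2 B F"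
      for s' t'
      using other[OF that(1)] that(2,3) unfolding Rel2_def by force
    then show ?thesis using arr diag by auto
  qed
  moreover have "{s'. (v, s', t) \<in> ?CA \<and> (s', s) \<in> Rel2 B F \<and> m = {#(s', s)#}}
                 = (if m = {#(s, s)#} then {s} else {})"
  proof -
    have "s' = s" if "(v, s', t) \<in> ?CA" "(s', s) \<in> Rel2 B F" for s'
      using other[OF that(1)] that(2) unfolding Rel2_def by force
    then show ?thesis using arr diag by auto
  qed
  ultimately show ?thesis
    unfolding Ecoef_def by simp
qed

lemma extremal_links:
  assumes "extremal Q1 src tgt B F mu v s t"
  shows "links Q1 src tgt B F mu v t s = {{#(t, t), (s, s)#}, {#(s, s)#}}"
  using extremal_coeff_arrow(6)[OF assms]
  unfolding links_def extremal_Ecoef[OF assms] by auto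

lemma extremal_neighbours:
  assumes "extremal Q1 src tgt B F mu v s t"
  shows "neighbours Q1 src tgt B F mu v t s = {(t, t), (s, s)}"
  unfolding neighbours_def extremal_links[OF assms] by auto

lemma partial_evaluation_extremal:
  assumes pe: "partial_evaluation Q1 src tgt B F mu ev"
    and ext: "extremal Q1 src tgt B F mu v s t"
    and tt: "ev (t, t) = Some x"
  obtains y where "ev (s, s) = Some y" and "y * (x - 1) = 0"
proof -
  let ?E = "Ecoef Q1 src tgt B F mu v t s"
  let ?P = "\<lambda>m. prod_mset (image_mset (\<lambda>ij. the (ev ij)) m)"
  define m1 where "m1 = {#(t, t), (s, s)#}"
  define m2 where "m2 = {#(s, s)#}"
  have "m1 \<noteq> m2"
    unfolding m1_def m2_def by simp
  have "\<forall>kl \<in> neighbours Q1 src tgt B F mu v t s.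
          neighbours Q1 src tgt B F mu v t s - {kl} \<subseteq> dom ev \<longrightarrow>
            kl \<in> dom ev \<and> (\<Sum>m \<in> links Q1 src tgt B F mu v t s. ?E m * ?P m) = 0"
    using pe bspec[OF _ extremal_Rel3[OF ext]] unfolding partial_evaluation_def by auto
  moreover have "{(t, t), (s, s)} - {(s, s)} \<subseteq> dom ev"
    using tt by auto
  ultimately have "(s, s) \<in> dom ev \<and> (\<Sum>m \<in> {m1, m2}. ?E m * ?P m) = 0"
    unfolding extremal_neighbours[OF ext] extremal_links[OF ext] m1_def m2_def by blast
  then obtain y where ss: "ev (s, s) = Some y" and "?E m1 * ?P m1 + ?E m2 * ?P m2 = 0"
    using \<open>m1 \<noteq> m2\<close> by auto
  moreover have "?E m1 = mu v s t" "?E m2 = - mu v s t"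
    using \<open>m1 \<noteq> m2\<close> unfolding extremal_Ecoef[OF ext] m1_def m2_def by auto
  moreover have "?P m1 = x * y" "?P m2 = y"
    using tt ss unfolding m1_def m2_def by simp_all
  ultimately have "mu v s t * (y * (x - 1)) = 0"
    by (simp add: algebra_simps)
  then show ?thesis
    using that ss extremal_coeff_arrow(6)[OF ext] by simp
qed

lemma f_state_diag:
  assumes "i \<in> B"
  shows "f_state B F \<beta> (i, i) = Some (if i \<in> \<beta> then 1 else 0)"
  using assms unfolding f_state_def Rel2_def by auto

theorem lemma2p8:
  fixes Q0 :: "'q set" and Q1 :: "'a set" and src tgt :: "'a \<Rightarrow> 'q"
    and B :: "('b::linorder) set" and F :: "'b \<Rightarrow> 'q"
    and mu :: "'a \<Rightarrow> 'b \<Rightarrow> 'b \<Rightarrow> complex" and \<beta> :: "'b set"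
  assumes "finite Q0" and "finite Q1"
    and "src ` Q1 \<subseteq> Q0" and "tgt ` Q1 \<subseteq> Q0"
    and "finite B" and "F ` B \<subseteq> Q0"
    and "\<beta> \<subseteq> B"
    and "\<not> ext_succ_closed Q1 src tgt B F mu \<beta>"
  shows "Ev Q1 src tgt B F mu (f_state B F \<beta>) = {}"
proof (rule equals0I)
  fix ev
  assume "ev \<in> Ev Q1 src tgt B F mu (f_state B F \<beta>)"
  then have pe: "partial_evaluation Q1 src tgt B F mu ev" and ext_f: "f_state B F \<beta> \<subseteq>\<^sub>m ev"
    unfolding Ev_def by blast+
  obtain v s t where ext: "extremal Q1 src tgt B F mu v s t" and "s \<in> \<beta>" "t \<notin> \<beta>"
    using assms(8) unfolding ext_succ_closed_def by blast
  then have "f_state B F \<beta> (s, s) = Some 1" "f_state B F \<beta> (t, t) = Some 0"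
    using f_state_diag[OF extremal_coeff_arrow(2)[OF ext], of F \<beta>]
      f_state_diag[OF extremal_coeff_arrow(3)[OF ext], of F \<beta>] by simp_all
  then have "ev (s, s) = Some 1" "ev (t, t) = Some 0"
    using ext_f by (auto simp: map_le_def dom_def)
  with partial_evaluation_extremal[OF pe ext] show False
    by auto
qed

end
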